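(* Let $\rho\in(0,1)$, $\alpha\ge0$, $k>2$ an integer, and define for $C\ge1$ the function $\hat\rho(C)=\tilde\rho(C)+3\alpha kC$. Let $C_0=\frac{2+\rho^k}{2-\rho^k}$. Then: (i) if $\alpha<\frac{\rho^k(1-\rho^k)}{3k(2+\rho^k)}=:\alpha_0$, there exists a nonempty interval $I$ containing $C_0$ such that $\hat\rho(C)<\rho^k$ for all $C\in I$; (ii) if $\alpha<\min\big(\frac{\rho^k(1-\rho^k)}{3k(2+\rho^k)},\frac{\rho^k-\rho_1}{3kC_1}\big)$, then $\hat\rho(C)<\rho^k$ for all $C\in[C_0,C_1]$; (iii) if $\alpha<\min\big(\frac{\rho^k(1-\rho^k)}{3k(2+\rho^k)},\frac{\rho^k-\rho_*}{3kC_*}\big)$, then $\hat\rho(C)<\rho^k$ for all $C\in[C_0,C_*]$.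
   Context: $\mathbb{R}_k[X]$ denotes real polynomials of degree at most $k$; $\|p\|_1$ is the sum of absolute values of coefficients of $p$. $\tilde\rho(C)=\min\{\max_{x\in[0,\rho]}|p(x)|:p\in\mathbb{R}_k[X],\ p(1)=1,\ \|p\|_1\le C\}$. (The quantity $\hat\rho(C)$ is the linear convergence factor guaranteed for one pass of Constrained Anderson Acceleration applied to a $\rho$-Lipschitz map $F=G+\xi$ with $0\preccurlyeq G\preccurlyeq\rho I$ symmetric and $\xi$ $\alpha$-Lipschitz.) $T_k$ is the first-kind Chebyshev polynomial of degree $k$; $C_*=\|p_*\|_1$ with $p_*(X)=T_k(\frac{2X-\rho}{\rho})/|T_k(\frac{2-\rho}{\rho})|$; $\rho_*=\frac{2\beta^k}{1+\beta^{2k}}$ with $\beta=\frac{1-\sqrt{1-\rho}}{1+\sqrt{1-\rho}}$; $\beta_\rho=\frac{\sqrt{1+\rho}-\sqrt{1-\rho}}{\sqrt{1+\rho}+\sqrt{1-\rho}}$, $\rho_1=\frac{2\beta_\rho^k}{1+\beta_\rho^{2k}}$, $C_1=\frac{\rho_1}{2\rho^k}\big((1-\sqrt{1+\rho^2})^k+(1+\sqrt{1+\rho^2})^k\big)$. *)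

theory Defs
  imports "HOL-Computational_Algebra.Polynomial"
begin

definition l1_coeffs :: "real poly \<Rightarrow> real" where
  "l1_coeffs p = (\<Sum>i\<le>degree p. \<bar>coeff p i\<bar>)"

definition sup_on :: "real \<Rightarrow> real poly \<Rightarrow> real" where
  "sup_on \<rho> p = (SUP x\<in>{0..\<rho>}. \<bar>poly p x\<bar>)"

text \<open>rho tilde (C): min over admissible polynomials (the minimum is attained; we write Inf).\<close>
definition rho_tilde :: "real \<Rightarrow> nat \<Rightarrow> real \<Rightarrow> real" where
  "rho_tilde \<rho> k C = Inf {sup_on \<rho> p | p. degree p \<le> k \<and> poly p 1 = 1 \<and> l1_coeffs p \<le> C}"

definition rho_hat :: "real \<Rightarrow> real \<Rightarrow> nat \<Rightarrow> real \<Rightarrow> real" where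
  "rho_hat \<rho> \<alpha> k C = rho_tilde \<rho> k C + 3 * \<alpha> * real k * C"

fun cheb :: "nat \<Rightarrow> real poly" where
  "cheb 0 = 1"
| "cheb (Suc 0) = [:0, 1:]"
| "cheb (Suc (Suc n)) = [:0, 2:] * cheb (Suc n) - cheb n"

definition p_star :: "real \<Rightarrow> nat \<Rightarrow> real poly" where
  "p_star \<rho> k = smult (1 / \<bar>poly (cheb k) ((2 - \<rho>) / \<rho>)\<bar>)
                     (pcompose (cheb k) [:-1, 2 / \<rho>:])"

definition C_star :: "real \<Rightarrow> nat \<Rightarrow> real" where
  "C_star \<rho> k = l1_coeffs (p_star \<rho> k)"

definition beta_star :: "real \<Rightarrow> real" where
  "beta_star \<rho> = (1 - sqrt (1 - \<rho>)) / (1 + sqrt (1 - \<rho>))"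

definition rho_star :: "real \<Rightarrow> nat \<Rightarrow> real" where
  "rho_star \<rho> k = 2 * beta_star \<rho> ^ k / (1 + beta_star \<rho> ^ (2 * k))"

definition beta_rho :: "real \<Rightarrow> real" where
  "beta_rho \<rho> = (sqrt (1 + \<rho>) - sqrt (1 - \<rho>)) / (sqrt (1 + \<rho>) + sqrt (1 - \<rho>))"

definition rho_1 :: "real \<Rightarrow> nat \<Rightarrow> real" where
  "rho_1 \<rho> k = 2 * beta_rho \<rho> ^ k / (1 + beta_rho \<rho> ^ (2 * k))"

definition C_1 :: "real \<Rightarrow> nat \<Rightarrow> real" where
  "C_1 \<rho> k = rho_1 \<rho> k / (2 * \<rho> ^ k) *
     ((1 - sqrt (1 + \<rho>\<^sup>2)) ^ k + (1 + sqrt (1 + \<rho>\<^sup>2)) ^ k)"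

definition C_0 :: "real \<Rightarrow> nat \<Rightarrow> real" where
  "C_0 \<rho> k = (2 + \<rho> ^ k) / (2 - \<rho> ^ k)"

definition alpha_0 :: "real \<Rightarrow> nat \<Rightarrow> real" where
  "alpha_0 \<rho> k = \<rho> ^ k * (1 - \<rho> ^ k) / (3 * real k * (2 + \<rho> ^ k))"

end

theory Submission
  imports Defs "HOL-Analysis.Analysis"
begin

(* If p0, p1 are admissible for the l1 budgets c0, c1 with sup-norms M0, M1 on [0, \<rho>], their
   convex combination is admissible for the convex combination of the budgets with at most the
   convex combination of the sup-norms.  As the penalty 3\<alpha>kC is linear, rho_hat lies below the
   chord through two such certificates, so it suffices to check the ends of each interval.
   At C_0 the certificate (2X^k - \<rho>^k) / (2 - \<rho>^k) has sup-norm \<rho>^k / (2 - \<rho>^k), which is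
   below \<rho>^k - 3\<alpha>kC_0 exactly when \<alpha> < alpha_0.  At C_1 and C_* the certificates are the
   rescaled Chebyshev polynomials T_k(X/\<rho>) / T_k(1/\<rho>) and p_*; their normalising values are
   computed by writing 1/\<rho>, resp. (2 - \<rho>)/\<rho>, as (\<beta> + 1/\<beta>)/2. *)

lemma l1_coeffs_eq_sum: "degree p \<le> N \<Longrightarrow> l1_coeffs p = (\<Sum>i\<le>N. \<bar>coeff p i\<bar>)"
  unfolding l1_coeffs_def
  by (rule sum.mono_neutral_left) (auto simp: coeff_eq_0)

lemma l1_coeffs_add_le: "l1_coeffs (p + q) \<le> l1_coeffs p + l1_coeffs q"
proof -
  let ?N = "max (degree p) (degree q)"
  have "l1_coeffs (p + q) = (\<Sum>i\<le>?N. \<bar>coeff (p + q) i\<bar>)"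
    by (rule l1_coeffs_eq_sum) (simp add: degree_add_le)
  also have "\<dots> \<le> (\<Sum>i\<le>?N. \<bar>coeff p i\<bar> + \<bar>coeff q i\<bar>)"
    by (rule sum_mono) (simp add: abs_triangle_ineq)
  also have "\<dots> = l1_coeffs p + l1_coeffs q"
    by (simp add: sum.distrib l1_coeffs_eq_sum[of p ?N] l1_coeffs_eq_sum[of q ?N])
  finally show ?thesis .
qed

lemma l1_coeffs_smult: "l1_coeffs (smult c p) = \<bar>c\<bar> * l1_coeffs p"
proof -
  have "l1_coeffs (smult c p) = (\<Sum>i\<le>degree p. \<bar>coeff (smult c p) i\<bar>)"
    by (rule l1_coeffs_eq_sum) (rule degree_smult_le)
  thus ?thesis by (simp add: l1_coeffs_def sum_distrib_left abs_mult)
qed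

lemma l1_coeffs_const: "l1_coeffs [:a:] = \<bar>a\<bar>"
  by (simp add: l1_coeffs_def)

lemma l1_coeffs_monom: "l1_coeffs (monom a n) = \<bar>a\<bar>"
proof -
  have "l1_coeffs (monom a n) = (\<Sum>i\<le>n. \<bar>coeff (monom a n) i\<bar>)"
    by (rule l1_coeffs_eq_sum) (rule degree_monom_le)
  also have "\<dots> = \<bar>a\<bar>" by (simp add: if_distrib cong: if_cong)
  finally show ?thesis .
qed

lemma l1_coeffs_pCons_0: "l1_coeffs (pCons 0 p) = l1_coeffs p"
proof -
  have "l1_coeffs (pCons 0 p) = (\<Sum>i\<le>Suc (degree p). \<bar>coeff (pCons 0 p) i\<bar>)"
    by (rule l1_coeffs_eq_sum) (simp add: degree_pCons_le)
  also have "\<dots> = l1_coeffs p"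
    by (subst sum.atMost_Suc_shift) (simp add: l1_coeffs_def)
  finally show ?thesis .
qed

lemma l1_coeffs_uminus: "l1_coeffs (- p) = l1_coeffs p"
  by (simp add: l1_coeffs_def)

lemma l1_coeffs_linear_mult: "l1_coeffs ([:0, c:] * p) = \<bar>c\<bar> * l1_coeffs p"
proof -
  have "[:0, c:] * p = smult c (pCons 0 p)"
    by (simp add: mult_pCons_left)
  thus ?thesis by (simp add: l1_coeffs_smult l1_coeffs_pCons_0)
qed

lemma sup_on_nonneg:
  assumes "0 \<le> \<rho>"
  shows "0 \<le> sup_on \<rho> p"
proof -
  have "compact ((\<lambda>x. \<bar>poly p x\<bar>) ` {0..\<rho>})"
    by (intro compact_continuous_image continuous_intros) simp
  hence "bdd_above ((\<lambda>x. \<bar>poly p x\<bar>) ` {0..\<rho>})"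
    by (intro bounded_imp_bdd_above compact_imp_bounded)
  thus ?thesis
    unfolding sup_on_def by (rule cSUP_upper2[of _ _ 0]) (use assms in auto)
qed

definition admissible :: "real \<Rightarrow> nat \<Rightarrow> real \<Rightarrow> real \<Rightarrow> real poly \<Rightarrow> bool" where
  "admissible \<rho> k C M p \<longleftrightarrow>
     degree p \<le> k \<and> poly p 1 = 1 \<and> l1_coeffs p \<le> C \<and> (\<forall>x\<in>{0..\<rho>}. \<bar>poly p x\<bar> \<le> M)"

lemma admissible_mono:
  "admissible \<rho> k C M p \<Longrightarrow> C \<le> C' \<Longrightarrow> admissible \<rho> k C' M p"
  unfolding admissible_def by auto

lemma rho_tilde_le_admissible:
  assumes "0 \<le> \<rho>" "admissible \<rho> k C M p"
  shows "rho_tilde \<rho> k C \<le> M"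
  unfolding rho_tilde_def
proof (rule cInf_lower2)
  show "sup_on \<rho> p \<in> {sup_on \<rho> p | p. degree p \<le> k \<and> poly p 1 = 1 \<and> l1_coeffs p \<le> C}"
    using assms(2) unfolding admissible_def by blast
  show "sup_on \<rho> p \<le> M"
    using assms unfolding sup_on_def admissible_def by (intro cSUP_least) auto
  show "bdd_below {sup_on \<rho> p | p. degree p \<le> k \<and> poly p 1 = 1 \<and> l1_coeffs p \<le> C}"
    using sup_on_nonneg[OF assms(1)] by (intro bdd_belowI[of _ 0]) auto
qed

lemma admissible_convex_combination:
  assumes "admissible \<rho> k c0 M0 p0" "admissible \<rho> k c1 M1 p1" "0 \<le> l" "l \<le> 1"
  shows "admissible \<rho> k (l * c0 + (1 - l) * c1) (l * M0 + (1 - l) * M1)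
           (smult l p0 + smult (1 - l) p1)"
  unfolding admissible_def
proof (intro conjI ballI)
  let ?q = "smult l p0 + smult (1 - l) p1"
  note p0 = assms(1)[unfolded admissible_def] and p1 = assms(2)[unfolded admissible_def]
  show "degree ?q \<le> k"
    using p0 p1 by (intro degree_add_le order_trans[OF degree_smult_le]) auto
  show "poly ?q 1 = 1"
    using p0 p1 by simp
  have "l1_coeffs ?q \<le> l1_coeffs (smult l p0) + l1_coeffs (smult (1 - l) p1)"
    by (rule l1_coeffs_add_le)
  also have "\<dots> = l * l1_coeffs p0 + (1 - l) * l1_coeffs p1"
    using assms(3,4) by (simp add: l1_coeffs_smult)
  also have "\<dots> \<le> l * c0 + (1 - l) * c1"
    using p0 p1 assms(3,4) by (intro add_mono mult_left_mono) auto
  finally show "l1_coeffs ?q \<le> l * c0 + (1 - l) * c1" .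
  fix x assume x: "x \<in> {0..\<rho>}"
  have "\<bar>poly ?q x\<bar> \<le> l * \<bar>poly p0 x\<bar> + (1 - l) * \<bar>poly p1 x\<bar>"
    using abs_triangle_ineq[of "l * poly p0 x" "(1 - l) * poly p1 x"] assms(3,4)
    by (simp add: abs_mult)
  also have "\<dots> \<le> l * M0 + (1 - l) * M1"
    using p0 p1 x assms(3,4) by (intro add_mono mult_left_mono) auto
  finally show "\<bar>poly ?q x\<bar> \<le> l * M0 + (1 - l) * M1" .
qed

lemma rho_hat_less_on_segment:
  assumes "0 \<le> \<rho>"
    and "admissible \<rho> k c0 M0 p0" "M0 + 3 * \<alpha> * real k * c0 < t"
    and "admissible \<rho> k c1 M1 p1" "M1 + 3 * \<alpha> * real k * c1 < t"
    and "c0 \<le> C" "C \<le> c1"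
  shows "rho_hat \<rho> \<alpha> k C < t"
proof -
  have "C \<in> closed_segment c1 c0"
    using assms(6,7) by (simp add: closed_segment_eq_real_ivl)
  then obtain l where l: "0 \<le> l" "l \<le> 1" and C: "C = l * c0 + (1 - l) * c1"
    by (auto simp: in_segment algebra_simps)
  have "rho_tilde \<rho> k C \<le> l * M0 + (1 - l) * M1"
    unfolding C
    by (rule rho_tilde_le_admissible[OF assms(1) admissible_convex_combination])
       (use assms l in auto)
  hence "rho_hat \<rho> \<alpha> k C
           \<le> l * (M0 + 3 * \<alpha> * real k * c0) + (1 - l) * (M1 + 3 * \<alpha> * real k * c1)"
    unfolding rho_hat_def C by (simp add: algebra_simps)
  also have "\<dots> < t"
    using l assms(3,5) by (intro convex_bound_lt) auto
  finally show ?thesis .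
qed

lemma degree_cheb: "degree (cheb n) \<le> n"
proof (induction n rule: cheb.induct)
  case (3 n)
  have "degree ([:0, 2:] * cheb (Suc n)) \<le> Suc (Suc n)"
    using 3(1) degree_mult_le[of "[:0, 2:]" "cheb (Suc n)"] by simp
  moreover have "degree (cheb n) \<le> Suc (Suc n)"
    using 3(2) by simp
  ultimately show ?case by (simp add: degree_diff_le)
qed auto

lemma poly_cheb_cos: "poly (cheb n) (cos t) = cos (real n * t)"
proof (induction n rule: cheb.induct)
  case (3 n)
  have "cos (real (Suc (Suc n)) * t) + cos (real n * t) = 2 * cos t * cos (real (Suc n) * t)"
    using cos_add[of "real (Suc n) * t" t] cos_diff[of "real (Suc n) * t" t]
    by (simp add: algebra_simps)
  thus ?case using 3 by (simp add: algebra_simps)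
qed auto

lemma abs_poly_cheb_le_1: "\<bar>x\<bar> \<le> 1 \<Longrightarrow> \<bar>poly (cheb n) x\<bar> \<le> 1"
  using poly_cheb_cos[of n "arccos x"] by (simp add: cos_arccos_abs)

(* Both the values of T_n and the bound on its l1 norm satisfy the recurrence
   u_{n+2} = (v + w) u_{n+1} - v w u_n of the power sums v^n + w^n. *)
lemma power_sum_recurrence:
  "v ^ Suc (Suc n) + w ^ Suc (Suc n) = (v + w) * (v ^ Suc n + w ^ Suc n) - v * w * (v ^ n + w ^ n)"
  for v w :: real
  by (simp add: algebra_simps)

lemma poly_cheb_mean:
  assumes "v * w = 1"
  shows "poly (cheb n) ((v + w) / 2) = (v ^ n + w ^ n) / 2"
proof (induction n rule: cheb.induct)
  case (3 n)
  thus ?case using assms power_sum_recurrence[of v n w] by (simp add: field_simps)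
qed auto

lemma l1_coeffs_cheb_scaled_le:
  assumes "0 \<le> c" "v + w = 2 * c" "v * w = -1"
  shows "l1_coeffs (pcompose (cheb n) [:0, c:]) \<le> (v ^ n + w ^ n) / 2"
proof (induction n rule: cheb.induct)
  case 1
  thus ?case using l1_coeffs_const[of 1] by (simp add: one_pCons)
next
  case 2
  thus ?case
    using l1_coeffs_linear_mult[of c 1] l1_coeffs_const[of 1] assms
    by (simp add: pcompose_pCons one_pCons)
next
  case (3 n)
  let ?S = "\<lambda>n. pcompose (cheb n) [:0, c:]"
  have "?S (Suc (Suc n)) = [:0, 2 * c:] * ?S (Suc n) + - ?S n"
    by (simp add: pcompose_diff pcompose_mult pcompose_pCons pcompose_smult)
  hence "l1_coeffs (?S (Suc (Suc n))) \<le> l1_coeffs ([:0, 2 * c:] * ?S (Suc n)) + l1_coeffs (- ?S n)"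
    by (simp only: l1_coeffs_add_le)
  also have "\<dots> = 2 * c * l1_coeffs (?S (Suc n)) + l1_coeffs (?S n)"
    using assms(1) by (simp only: l1_coeffs_linear_mult l1_coeffs_uminus abs_mult)
  also have "\<dots> \<le> 2 * c * ((v ^ Suc n + w ^ Suc n) / 2) + (v ^ n + w ^ n) / 2"
    using 3 assms(1) by (intro add_mono mult_left_mono) auto
  also have "\<dots> = (v ^ Suc (Suc n) + w ^ Suc (Suc n)) / 2"
    using assms power_sum_recurrence[of v n w] by (simp add: field_simps)
  finally show ?case .
qed

lemma cheb_at_mean_pos:
  assumes "0 < b"
  shows "0 < poly (cheb k) ((b + 1 / b) / 2)"
proof -
  have "0 < b ^ k + (1 / b) ^ k"
    using assms by (simp add: add_pos_pos)
  thus ?thesis using poly_cheb_mean[of b "1 / b" k] assms by simp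
qed

lemma inverse_cheb_at_mean:
  assumes "0 < b"
  shows "1 / poly (cheb k) ((b + 1 / b) / 2) = 2 * b ^ k / (1 + b ^ (2 * k))"
proof -
  have "poly (cheb k) ((b + 1 / b) / 2) = (b ^ k + 1 / b ^ k) / 2"
    using assms poly_cheb_mean[of b "1 / b" k] by (simp add: power_divide)
  also have "\<dots> = (1 + b ^ k * b ^ k) / (2 * b ^ k)"
    using assms by (simp add: field_simps)
  also have "b ^ k * b ^ k = b ^ (2 * k)"
    by (metis mult_2 power_add)
  finally show ?thesis by simp
qed

lemma beta_rho_pos:
  assumes "0 < \<rho>" "\<rho> < 1"
  shows "0 < beta_rho \<rho>"
proof -
  have sqrt_bounds: "sqrt (1 - \<rho>) < sqrt (1 + \<rho>)" "0 < sqrt (1 - \<rho>)"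
    using assms by auto
  show ?thesis
    unfolding beta_rho_def by (intro divide_pos_pos; use sqrt_bounds in linarith)
qed

lemma beta_rho_mean:
  assumes "0 < \<rho>" "\<rho> < 1"
  shows "(beta_rho \<rho> + 1 / beta_rho \<rho>) / 2 = 1 / \<rho>"
proof -
  define a where "a = sqrt (1 + \<rho>)"
  define b where "b = sqrt (1 - \<rho>)"
  have "b < a" "0 < b"
    using assms by (auto simp: a_def b_def)
  hence "(a - b) / (a + b) + (a + b) / (a - b) = 2 * (a\<^sup>2 + b\<^sup>2) / (a\<^sup>2 - b\<^sup>2)"
    by (simp add: field_simps power2_eq_square)
  also have "\<dots> = 2 / \<rho>"
    using assms by (simp add: a_def b_def)
  finally show ?thesis
    by (simp add: beta_rho_def a_def [symmetric] b_def [symmetric])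
qed

lemma beta_star_pos:
  assumes "0 < \<rho>" "\<rho> < 1"
  shows "0 < beta_star \<rho>"
proof -
  have sqrt_bounds: "sqrt (1 - \<rho>) < 1" "0 \<le> sqrt (1 - \<rho>)"
    using assms by auto
  show ?thesis
    unfolding beta_star_def by (intro divide_pos_pos; use sqrt_bounds in linarith)
qed

lemma beta_star_mean:
  assumes "0 < \<rho>" "\<rho> < 1"
  shows "(beta_star \<rho> + 1 / beta_star \<rho>) / 2 = (2 - \<rho>) / \<rho>"
proof -
  define s where "s = sqrt (1 - \<rho>)"
  have "0 < s" "s < 1"
    using assms by (auto simp: s_def)
  hence "(1 - s) / (1 + s) + (1 + s) / (1 - s) = 2 * (1 + s\<^sup>2) / (1 - s\<^sup>2)"
    by (simp add: field_simps power2_eq_square)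
  also have "\<dots> = 2 * (2 - \<rho>) / \<rho>"
    using assms by (simp add: s_def)
  finally show ?thesis
    using assms by (simp add: beta_star_def s_def [symmetric] field_simps)
qed

definition p_0 :: "real \<Rightarrow> nat \<Rightarrow> real poly" where
  "p_0 \<rho> k = smult (1 / (2 - \<rho> ^ k)) (monom 2 k + [:- (\<rho> ^ k):])"

definition p_1 :: "real \<Rightarrow> nat \<Rightarrow> real poly" where
  "p_1 \<rho> k = smult (1 / poly (cheb k) (1 / \<rho>)) (pcompose (cheb k) [:0, 1 / \<rho>:])"

lemma admissible_p_0:
  assumes "0 < \<rho>" "\<rho> < 1" "0 < k"
  shows "admissible \<rho> k (C_0 \<rho> k) (\<rho> ^ k / (2 - \<rho> ^ k)) (p_0 \<rho> k)"
  unfolding admissible_def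
proof (intro conjI ballI)
  have r: "0 < \<rho> ^ k" "\<rho> ^ k < 1"
    using assms by (auto simp: power_less_one_iff)
  show "degree (p_0 \<rho> k) \<le> k"
    unfolding p_0_def by (intro order_trans[OF degree_smult_le] degree_add_le degree_monom_le) auto
  show "poly (p_0 \<rho> k) 1 = 1"
    using r by (simp add: p_0_def poly_monom)
  have "l1_coeffs (monom 2 k + [:- (\<rho> ^ k):]) \<le> 2 + \<rho> ^ k"
    using l1_coeffs_add_le[of "monom 2 k" "[:- (\<rho> ^ k):]"] r
    by (simp add: l1_coeffs_monom l1_coeffs_const)
  thus "l1_coeffs (p_0 \<rho> k) \<le> C_0 \<rho> k"
    using r by (simp add: p_0_def l1_coeffs_smult C_0_def divide_right_mono)
  fix x assume "x \<in> {0..\<rho>}"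
  hence "0 \<le> x ^ k" "x ^ k \<le> \<rho> ^ k"
    by (auto intro: power_mono)
  hence "\<bar>2 * x ^ k - \<rho> ^ k\<bar> \<le> \<rho> ^ k"
    by linarith
  thus "\<bar>poly (p_0 \<rho> k) x\<bar> \<le> \<rho> ^ k / (2 - \<rho> ^ k)"
    using r by (simp add: p_0_def poly_monom divide_right_mono)
qed

lemma admissible_p_1:
  assumes "0 < \<rho>" "\<rho> < 1"
  shows "admissible \<rho> k (C_1 \<rho> k) (rho_1 \<rho> k) (p_1 \<rho> k)"
  unfolding admissible_def
proof (intro conjI ballI)
  let ?T = "poly (cheb k) (1 / \<rho>)"
  have T_pos: "0 < ?T" and T_inv: "1 / ?T = rho_1 \<rho> k"
    using cheb_at_mean_pos[of "beta_rho \<rho>" k] inverse_cheb_at_mean[of "beta_rho \<rho>" k]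
    by (simp_all add: beta_rho_pos beta_rho_mean assms rho_1_def)
  show "degree (p_1 \<rho> k) \<le> k"
    unfolding p_1_def by (rule order_trans[OF degree_smult_le]) (simp add: degree_pcompose degree_cheb)
  show "poly (p_1 \<rho> k) 1 = 1"
    using T_pos by (simp add: p_1_def poly_pcompose)
  define s where "s = sqrt (1 + \<rho>\<^sup>2)"
  have "l1_coeffs (pcompose (cheb k) [:0, 1 / \<rho>:]) \<le> (((1 + s) / \<rho>) ^ k + ((1 - s) / \<rho>) ^ k) / 2"
    using assms
    by (intro l1_coeffs_cheb_scaled_le) (auto simp: s_def field_simps power2_eq_square)
  hence "l1_coeffs (p_1 \<rho> k) \<le> 1 / ?T * ((((1 + s) / \<rho>) ^ k + ((1 - s) / \<rho>) ^ k) / 2)"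
    using T_pos by (simp add: p_1_def l1_coeffs_smult field_simps)
  also have "\<dots> = C_1 \<rho> k"
    using assms T_inv by (simp add: C_1_def s_def power_divide field_simps)
  finally show "l1_coeffs (p_1 \<rho> k) \<le> C_1 \<rho> k" .
  fix x assume "x \<in> {0..\<rho>}"
  hence "\<bar>poly (cheb k) (x / \<rho>)\<bar> \<le> 1"
    using assms by (intro abs_poly_cheb_le_1) auto
  hence "\<bar>poly (p_1 \<rho> k) x\<bar> \<le> 1 / ?T"
    using T_pos by (simp add: p_1_def poly_pcompose abs_mult divide_right_mono mult.commute)
  thus "\<bar>poly (p_1 \<rho> k) x\<bar> \<le> rho_1 \<rho> k"
    using T_inv by simp
qed

lemma admissible_p_star:
  assumes "0 < \<rho>" "\<rho> < 1"
  shows "admissible \<rho> k (C_star \<rho> k) (rho_star \<rho> k) (p_star \<rho> k)"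
  unfolding admissible_def
proof (intro conjI ballI)
  let ?T = "poly (cheb k) ((2 - \<rho>) / \<rho>)"
  have T_pos: "0 < ?T" and T_inv: "1 / ?T = rho_star \<rho> k"
    using cheb_at_mean_pos[of "beta_star \<rho>" k] inverse_cheb_at_mean[of "beta_star \<rho>" k]
    by (simp_all add: beta_star_pos beta_star_mean assms rho_star_def)
  have shift: "-1 + x * (2 / \<rho>) = (2 * x - \<rho>) / \<rho>" for x
    using assms by (simp add: field_simps)
  show "degree (p_star \<rho> k) \<le> k"
    unfolding p_star_def by (rule order_trans[OF degree_smult_le]) (simp add: degree_pcompose degree_cheb)
  show "poly (p_star \<rho> k) 1 = 1"
    using T_pos shift[of 1] by (simp add: p_star_def poly_pcompose)
  show "l1_coeffs (p_star \<rho> k) \<le> C_star \<rho> k"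
    by (simp add: C_star_def)
  fix x assume "x \<in> {0..\<rho>}"
  hence "\<bar>poly (cheb k) ((2 * x - \<rho>) / \<rho>)\<bar> \<le> 1"
    using assms by (intro abs_poly_cheb_le_1) (auto simp: abs_le_iff field_simps)
  hence "\<bar>poly (p_star \<rho> k) x\<bar> \<le> 1 / ?T"
    using T_pos shift
    by (simp add: p_star_def poly_pcompose abs_mult divide_right_mono mult.commute)
  thus "\<bar>poly (p_star \<rho> k) x\<bar> \<le> rho_star \<rho> k"
    using T_inv by simp
qed

lemma one_le_C_0: "0 \<le> \<rho> \<Longrightarrow> \<rho> < 1 \<Longrightarrow> 1 \<le> C_0 \<rho> k"
  using power_less_one_iff[of \<rho> k] by (cases "k = 0") (auto simp: C_0_def)

lemma alpha_0_eq:
  assumes "0 < \<rho>" "\<rho> < 1" "0 < k"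
  shows "3 * alpha_0 \<rho> k * real k * C_0 \<rho> k = \<rho> ^ k - \<rho> ^ k / (2 - \<rho> ^ k)"
proof -
  define t where "t = \<rho> ^ k"
  have t: "0 < t" "t < 1"
    using assms by (auto simp: t_def power_less_one_iff)
  have "3 * alpha_0 \<rho> k * real k * C_0 \<rho> k = t * (1 - t) / (2 + t) * ((2 + t) / (2 - t))"
    using assms by (simp add: alpha_0_def C_0_def t_def)
  also have "\<dots> = t * (1 - t) / (2 - t)"
    using t by simp
  also have "\<dots> = t - t / (2 - t)"
    using t by (simp add: field_simps)
  finally show ?thesis by (simp add: t_def)
qed

lemma p_0_bound_at_C_0:
  assumes "0 < \<rho>" "\<rho> < 1" "0 < k" "\<alpha> < alpha_0 \<rho> k"
  shows "\<rho> ^ k / (2 - \<rho> ^ k) + 3 * \<alpha> * real k * C_0 \<rho> k < \<rho> ^ k"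
proof -
  have "3 * \<alpha> * real k * C_0 \<rho> k < 3 * alpha_0 \<rho> k * real k * C_0 \<rho> k"
    using assms one_le_C_0[of \<rho> k] by (intro mult_strict_right_mono) auto
  thus ?thesis using alpha_0_eq[OF assms(1-3)] by simp
qed

lemma penalty_bound_of_alpha_less:
  assumes "\<alpha> < (t - M) / (3 * real k * C)" "0 < k" "0 < C"
  shows "M + 3 * \<alpha> * real k * C < t"
  using assms by (simp add: less_divide_eq algebra_simps)

lemma rho_hat_less_from_C_0:
  assumes "0 < \<rho>" "\<rho> < 1" "0 < k" "\<alpha> < alpha_0 \<rho> k"
    and "admissible \<rho> k c1 M1 p1" "M1 + 3 * \<alpha> * real k * c1 < \<rho> ^ k"
    and "C \<in> {C_0 \<rho> k..c1}"
  shows "rho_hat \<rho> \<alpha> k C < \<rho> ^ k"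
  by (rule rho_hat_less_on_segment[OF _ admissible_p_0[OF assms(1-3)]
        p_0_bound_at_C_0[OF assms(1-4)] assms(5,6)])
     (use assms in auto)

lemma exists_gt_affine_less:
  fixes e :: real
  assumes "M + e * c < t" "0 \<le> e"
  obtains b where "c < b" "M + e * b < t"
proof
  define D where "D = t - M - e * c"
  have "0 < D" using assms(1) by (simp add: D_def)
  hence "e * (D / (e + 1)) < D"
    using assms(2) by (simp add: field_simps)
  thus "M + e * (c + D / (e + 1)) < t"
    by (simp add: D_def algebra_simps)
  show "c < c + D / (e + 1)"
    using \<open>0 < D\<close> assms(2) by simp
qed

lemma rho_hat_less_near_C_0:
  assumes "0 < \<rho>" "\<rho> < 1" "0 < k" "0 \<le> \<alpha>" "\<alpha> < alpha_0 \<rho> k"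
  shows "\<exists>a b. 1 \<le> a \<and> a < b \<and> C_0 \<rho> k \<in> {a..b} \<and>
           (\<forall>C\<in>{a..b}. rho_hat \<rho> \<alpha> k C < \<rho> ^ k)"
proof -
  obtain b where b: "C_0 \<rho> k < b" "\<rho> ^ k / (2 - \<rho> ^ k) + 3 * \<alpha> * real k * b < \<rho> ^ k"
    using exists_gt_affine_less[OF p_0_bound_at_C_0[OF assms(1-3,5)]] assms(4) by auto
  have "rho_hat \<rho> \<alpha> k C < \<rho> ^ k" if "C \<in> {C_0 \<rho> k..b}" for C
    using admissible_mono[OF admissible_p_0[OF assms(1-3)] less_imp_le[OF b(1)]]
    by (rule rho_hat_less_from_C_0[OF assms(1-3,5) _ b(2) that])
  thus ?thesis
    using one_le_C_0[of \<rho> k] assms(1,2) b(1) by force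
qed

lemma rho_hat_less_up_to_admissible:
  assumes "0 < \<rho>" "\<rho> < 1" "0 < k"
    and "\<alpha> < min (alpha_0 \<rho> k) ((\<rho> ^ k - M) / (3 * real k * c1))"
    and "admissible \<rho> k c1 M p"
  shows "\<forall>C\<in>{C_0 \<rho> k..c1}. rho_hat \<rho> \<alpha> k C < \<rho> ^ k"
proof
  fix C assume C: "C \<in> {C_0 \<rho> k..c1}"
  have "M + 3 * \<alpha> * real k * c1 < \<rho> ^ k"
    using assms(1-4) C one_le_C_0[of \<rho> k] by (intro penalty_bound_of_alpha_less) auto
  thus "rho_hat \<rho> \<alpha> k C < \<rho> ^ k"
    using assms(4) by (intro rho_hat_less_from_C_0[OF assms(1-3) _ assms(5) _ C]) auto
qed

theorem proposition7:
  fixes \<rho> \<alpha> :: real and k :: nat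
  assumes "0 < \<rho>" "\<rho> < 1" "0 \<le> \<alpha>" "2 < k"
  shows "(\<alpha> < alpha_0 \<rho> k \<longrightarrow>
            (\<exists>a b. 1 \<le> a \<and> a < b \<and> C_0 \<rho> k \<in> {a..b} \<and>
                   (\<forall>C\<in>{a..b}. rho_hat \<rho> \<alpha> k C < \<rho> ^ k)))
       \<and> (\<alpha> < min (alpha_0 \<rho> k) ((\<rho> ^ k - rho_1 \<rho> k) / (3 * real k * C_1 \<rho> k)) \<longrightarrow>
            (\<forall>C\<in>{C_0 \<rho> k..C_1 \<rho> k}. rho_hat \<rho> \<alpha> k C < \<rho> ^ k))
       \<and> (\<alpha> < min (alpha_0 \<rho> k) ((\<rho> ^ k - rho_star \<rho> k) / (3 * real k * C_star \<rho> k)) \<longrightarrow>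
            (\<forall>C\<in>{C_0 \<rho> k..C_star \<rho> k}. rho_hat \<rho> \<alpha> k C < \<rho> ^ k))"
proof -
  have k: "0 < k" using assms(4) by simp
  show ?thesis
    using rho_hat_less_near_C_0[OF assms(1,2) k assms(3)]
      rho_hat_less_up_to_admissible[OF assms(1,2) k _ admissible_p_1[OF assms(1,2)]]
      rho_hat_less_up_to_admissible[OF assms(1,2) k _ admissible_p_star[OF assms(1,2)]]
    by blast
qed

end
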